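(* Let $\mathbf{J}\in\mathbb{R}^{n\times n}$ be a real symmetric matrix with zero diagonal, and let $\alpha,\beta>0$ be such that $\mu:=\lambda_{\min}(\mathbf{J}+\alpha\mathbf{I})>0$. Let $\{\boldsymbol{x}^{(k)}\}_{k\ge0}$ be the DOCH iterates starting from an arbitrary $\boldsymbol{x}^{(0)}\in\mathbb{R}^n$. Then the sequence $\{\boldsymbol{x}^{(k)}\}$ is bounded, and $\lim_{k\to\infty}\|\boldsymbol{x}^{(k+1)}-\boldsymbol{x}^{(k)}\|_2=0$.
   Context: Let $f(\boldsymbol{x})=\frac{\beta}{4}\sum_i x_i^4$, $g(\boldsymbol{x})=\frac12\boldsymbol{x}^\top(\mathbf{J}+\alpha\mathbf{I})\boldsymbol{x}$ and $\mathcal{H}=f-g$. The DOCH iterates are defined by $\boldsymbol{x}^{(k+1)}$ being the minimizer of $F_k(\boldsymbol{x})=f(\boldsymbol{x})-g(\boldsymbol{x}^{(k)})-\nabla g(\boldsymbol{x}^{(k)})^\top(\boldsymbol{x}-\boldsymbol{x}^{(k)})$; explicitly, $\boldsymbol{x}^{(k+1)}=\varphi(\beta^{-1}(\mathbf{J}+\alpha\mathbf{I})\boldsymbol{x}^{(k)})$ with $\varphi$ the componentwise real cube root. *)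

theory Defs
  imports "HOL-Analysis.Analysis"
begin

(* Smallest eigenvalue of a real square matrix (used for symmetric matrices,
   whose eigenvalues are all real). *)
definition lambda_min :: "real^'n^'n \<Rightarrow> real" where
  "lambda_min A = Min {l. \<exists>v. v \<noteq> 0 \<and> A *v v = l *\<^sub>R v}"

definition doch_step :: "real^'n^'n \<Rightarrow> real \<Rightarrow> real \<Rightarrow> real^'n \<Rightarrow> real^'n" where
  "doch_step J \<alpha> \<beta> x = (\<chi> i. root 3 ((((J + \<alpha> *\<^sub>R mat 1) *v x) $ i) / \<beta>))"

end

theory Submission
  imports Defs
begin

text \<open>DOCH is the DC algorithm for \<open>\<H> = f - g\<close>: the next iterate \<open>z\<close> solves
  \<open>\<nabla>f(z) = \<nabla>g(x)\<close>, so convexity of \<open>f\<close> and exactness of the quadratic \<open>g\<close> give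
  \<open>\<H>(z) \<le> \<H>(x) - (z - x)\<^sup>T(J + \<alpha>I)(z - x)/2 \<le> \<H>(x) - \<mu>/2 \<parallel>z - x\<parallel>\<^sup>2\<close>, the last step by
  the Rayleigh bound. The quartic \<open>f\<close> dominates the quadratic \<open>g\<close>, so \<open>\<H>\<close> is bounded below
  and its sublevel sets are bounded. Hence the iterates stay in the sublevel set of the
  initial energy, and the squared steps are summable by telescoping, so they tend to zero.\<close>

lemma transpose_add: "transpose (A + B) = transpose A + transpose B"
  by (simp add: transpose_def vec_eq_iff)

lemma transpose_diff: "transpose (A - B) = transpose A - transpose B"
  by (simp add: transpose_def vec_eq_iff)

lemma symmetric_matrix_inner_commute:
  fixes A :: "real^'n^'n"
  assumes "transpose A = A"
  shows "x \<bullet> (A *v y) = y \<bullet> (A *v x)"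
proof -
  have "x \<bullet> (A *v y) = (transpose A *v x) \<bullet> y"
    by (simp add: dot_lmul_matrix)
  then show ?thesis
    using assms by (simp add: inner_commute)
qed

lemma finite_eigenvalues_symmetric:
  fixes A :: "real^'n^'n"
  assumes "transpose A = A"
  shows "finite {l. \<exists>v. v \<noteq> 0 \<and> A *v v = l *\<^sub>R v}" (is "finite ?S")
proof -
  define e where "e l = (SOME v. v \<noteq> 0 \<and> A *v v = l *\<^sub>R v)" for l
  have e: "e l \<noteq> 0 \<and> A *v e l = l *\<^sub>R e l" if "l \<in> ?S" for l
    using that unfolding e_def by (metis (mono_tags, lifting) mem_Collect_eq someI_ex)
  have "inj_on e ?S"
  proof (rule inj_onI)
    fix a b assume a: "a \<in> ?S" and b: "b \<in> ?S" and "e a = e b"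
    then have "a *\<^sub>R e a = b *\<^sub>R e a" using e[OF a] e[OF b] by metis
    then show "a = b" using e[OF a] by simp
  qed
  moreover have "e a \<bullet> e b = 0" if a: "a \<in> ?S" and b: "b \<in> ?S" and "a \<noteq> b" for a b
  proof -
    have "a * (e a \<bullet> e b) = e b \<bullet> (A *v e a)"
      using e[OF a] by (simp add: inner_commute)
    also have "\<dots> = e a \<bullet> (A *v e b)"
      by (rule symmetric_matrix_inner_commute[OF assms])
    also have "\<dots> = b * (e a \<bullet> e b)"
      using e[OF b] by simp
    finally show ?thesis
      using \<open>a \<noteq> b\<close> by simp
  qed
  then have "pairwise orthogonal (e ` ?S)"
    by (auto simp: pairwise_def orthogonal_def)
  moreover have "0 \<notin> e ` ?S"
    using e by force
  ultimately have "independent (e ` ?S)"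
    using pairwise_orthogonal_independent by blast
  with \<open>inj_on e ?S\<close> show ?thesis
    using independent_bound finite_imageD by blast
qed

text \<open>The form is minimal at \<open>v\<close>, so by Fermat's rule along the line \<open>v + t B v\<close> its
  gradient \<open>2 B v\<close> vanishes.\<close>

lemma psd_quadratic_form_zero_imp_kernel:
  fixes B :: "real^'n^'n"
  assumes sym: "transpose B = B" and psd: "\<And>u. 0 \<le> u \<bullet> (B *v u)"
    and zero: "v \<bullet> (B *v v) = 0"
  shows "B *v v = 0"
proof -
  define w where "w = B *v v"
  define f where "f t = 2 * t * (w \<bullet> w) + t\<^sup>2 * (w \<bullet> (B *v w))" for t
  have "f t = (v + t *\<^sub>R w) \<bullet> (B *v (v + t *\<^sub>R w))" for t
    using zero symmetric_matrix_inner_commute[OF sym, of v w]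
    by (simp add: f_def w_def algebra_simps inner_add_left inner_add_right power2_eq_square)
  then have "\<forall>t. \<bar>0 - t\<bar> < 1 \<longrightarrow> f 0 \<le> f t"
    using psd by (simp add: f_def)
  moreover have "DERIV f 0 :> 2 * (w \<bullet> w)"
    unfolding f_def by (auto intro!: derivative_eq_intros)
  ultimately have "2 * (w \<bullet> w) = 0"
    using DERIV_local_min zero_less_one by blast
  then show ?thesis by (simp add: w_def)
qed

text \<open>The minimum \<open>m\<close> of the form on the unit sphere is an eigenvalue, since \<open>A - m I\<close> is
  positive semidefinite and its form vanishes at the minimiser.\<close>

lemma lambda_min_quadratic_form_le:
  fixes A :: "real^'n^'n"
  assumes sym: "transpose A = A"
  shows "lambda_min A * (norm u)\<^sup>2 \<le> u \<bullet> (A *v u)"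
proof -
  let ?q = "\<lambda>u. u \<bullet> (A *v u)"
  have "continuous_on (sphere 0 1) ?q"
    by (intro continuous_intros linear_continuous_on matrix_vector_mul_bounded_linear)
  moreover have "sphere (0::real^'n) 1 \<noteq> {}"
    by simp
  ultimately obtain v where v: "v \<in> sphere 0 1" and v_min: "\<And>y. y \<in> sphere 0 1 \<Longrightarrow> ?q v \<le> ?q y"
    using continuous_attains_inf[OF compact_sphere] by blast
  define m where "m = ?q v"
  have m_le: "m * (norm y)\<^sup>2 \<le> ?q y" for y
  proof (cases "y = 0")
    case False
    then have "y /\<^sub>R norm y \<in> sphere 0 1"
      by simp
    then have "m \<le> ?q (y /\<^sub>R norm y)"
      using v_min unfolding m_def by blast
    also have "?q (y /\<^sub>R norm y) = ?q y / (norm y)\<^sup>2"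
      by (simp add: matrix_vector_mult_scaleR power2_eq_square field_simps)
    finally show ?thesis
      using False by (simp add: field_simps)
  qed simp
  define B where "B = A - m *\<^sub>R mat 1"
  have B_form: "y \<bullet> (B *v y) = ?q y - m * (norm y)\<^sup>2" for y
    by (simp add: B_def matrix_vector_mult_diff_rdistrib inner_diff_right power2_norm_eq_inner
        flip: scaleR_matrix_vector_assoc)
  have "B *v v = 0"
  proof (rule psd_quadratic_form_zero_imp_kernel)
    show "transpose B = B"
      using sym by (simp add: B_def transpose_diff transpose_scalar)
    show "0 \<le> y \<bullet> (B *v y)" for y
      using m_le[of y] by (simp add: B_form)
    show "v \<bullet> (B *v v) = 0"
      using v by (simp add: B_form m_def)
  qed
  then have "A *v v = m *\<^sub>R v" and "v \<noteq> 0"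
    using v by (auto simp: B_def matrix_vector_mult_diff_rdistrib simp flip: scaleR_matrix_vector_assoc)
  then have "lambda_min A \<le> m"
    unfolding lambda_min_def using finite_eigenvalues_symmetric[OF sym] by (auto intro!: Min_le)
  then have "lambda_min A * (norm u)\<^sup>2 \<le> m * (norm u)\<^sup>2"
    by (simp add: mult_right_mono)
  also have "\<dots> \<le> ?q u"
    by (rule m_le)
  finally show ?thesis .
qed

lemma summable_of_sufficient_decrease:
  fixes e d :: "nat \<Rightarrow> real"
  assumes c: "c > 0" and d_nonneg: "\<And>k. 0 \<le> d k"
    and decrease: "\<And>k. c * d k \<le> e k - e (Suc k)" and lower: "\<And>k. L \<le> e k"
  shows "summable d"
proof -
  have "decseq e"
  proof (rule decseq_SucI)
    show "e (Suc k) \<le> e k" for k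
      using decrease[of k] mult_nonneg_nonneg[OF less_imp_le[OF c] d_nonneg[of k]] by linarith
  qed
  then obtain l where "e \<longlonglongrightarrow> l"
    using decseq_convergent lower by metis
  then have "summable (\<lambda>k. (e k - e (Suc k)) / c)"
    by (intro summable_divide telescope_summable')
  moreover have "norm (d k) \<le> (e k - e (Suc k)) / c" for k
    using decrease[of k] d_nonneg[of k] c by (simp add: field_simps)
  ultimately show ?thesis
    by (rule summable_comparison_test')
qed

lemma power4_diff_le: "(y::real) ^ 4 - x ^ 4 \<le> 4 * y ^ 3 * (y - x)"
proof -
  have "4 * y ^ 3 * (y - x) - (y ^ 4 - x ^ 4) = (y - x)\<^sup>2 * ((y + x)\<^sup>2 + 2 * y\<^sup>2)"
    by (simp add: algebra_simps power2_eq_square power3_eq_cube power4_eq_xxxx)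
  moreover have "0 \<le> (y - x)\<^sup>2 * ((y + x)\<^sup>2 + 2 * y\<^sup>2)"
    by simp
  ultimately show ?thesis
    by linarith
qed

lemma quartic_minus_quadratic_ge:
  assumes "(\<beta>::real) > 0"
  shows "\<beta> / 8 * t ^ 4 - K\<^sup>2 / (2 * \<beta>) \<le> \<beta> / 4 * t ^ 4 - K / 2 * t\<^sup>2"
proof -
  have "\<beta> / 4 * t ^ 4 - K / 2 * t\<^sup>2 - (\<beta> / 8 * t ^ 4 - K\<^sup>2 / (2 * \<beta>)) = (\<beta> * t\<^sup>2 - 2 * K)\<^sup>2 / (8 * \<beta>)"
    using assms by (simp add: field_simps power2_eq_square power4_eq_xxxx)
  moreover have "0 \<le> (\<beta> * t\<^sup>2 - 2 * K)\<^sup>2 / (8 * \<beta>)"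
    using assms by simp
  ultimately show ?thesis
    by linarith
qed

lemma bounded_quartic_sublevel: "bounded {y :: real^'n. (\<Sum>i\<in>UNIV. (y $ i) ^ 4) \<le> R}"
proof -
  have "norm y \<le> CARD('n) * (1 + R)" if "(\<Sum>i\<in>UNIV. (y $ i) ^ 4) \<le> R" for y :: "real^'n"
  proof -
    have "\<bar>y $ j\<bar> \<le> 1 + R" for j
    proof -
      have "\<bar>y $ j\<bar> \<le> 1 + (y $ j) ^ 4"
      proof (cases "\<bar>y $ j\<bar> \<le> 1")
        case False
        then have "\<bar>y $ j\<bar> ^ 1 \<le> \<bar>y $ j\<bar> ^ 4"
          by (intro power_increasing) auto
        then show ?thesis
          by (simp add: power_abs)
      qed (simp add: add_increasing2)
      also have "(y $ j) ^ 4 \<le> (\<Sum>i\<in>UNIV. (y $ i) ^ 4)"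
        by (intro member_le_sum) auto
      finally show ?thesis
        using that by linarith
    qed
    then have "(\<Sum>i\<in>UNIV. \<bar>y $ i\<bar>) \<le> CARD('n) * (1 + R)"
      using sum_bounded_above[of UNIV "\<lambda>i. \<bar>y $ i\<bar>"] by auto
    then show ?thesis
      using norm_le_l1_cart order_trans by blast
  qed
  then show ?thesis
    unfolding bounded_iff by blast
qed

definition doch_energy :: "real \<Rightarrow> real^'n^'n \<Rightarrow> real^'n \<Rightarrow> real" where
  "doch_energy \<beta> A y = \<beta> / 4 * (\<Sum>i\<in>UNIV. (y $ i) ^ 4) - y \<bullet> (A *v y) / 2"

lemma doch_step_optimality:
  assumes "\<beta> > 0"
  shows "\<beta> * (doch_step J \<alpha> \<beta> y $ i) ^ 3 = ((J + \<alpha> *\<^sub>R mat 1) *v y) $ i"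
  using assms by (simp add: doch_step_def odd_real_root_pow)

lemma doch_energy_descent:
  fixes A :: "real^'n^'n"
  assumes sym: "transpose A = A" and \<beta>: "\<beta> > 0"
    and optimality: "\<And>i. \<beta> * (z $ i) ^ 3 = (A *v y) $ i"
  shows "doch_energy \<beta> A z \<le> doch_energy \<beta> A y - (z - y) \<bullet> (A *v (z - y)) / 2"
proof -
  define d where "d = z - y"
  have "\<beta> / 4 * (\<Sum>i\<in>UNIV. (z $ i) ^ 4) - \<beta> / 4 * (\<Sum>i\<in>UNIV. (y $ i) ^ 4)
        = (\<Sum>i\<in>UNIV. \<beta> / 4 * ((z $ i) ^ 4 - (y $ i) ^ 4))"
    by (simp add: sum_distrib_left sum_subtractf right_diff_distrib)
  also have "\<dots> \<le> (\<Sum>i\<in>UNIV. \<beta> / 4 * (4 * (z $ i) ^ 3 * (z $ i - y $ i)))"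
    using \<beta> by (intro sum_mono mult_left_mono power4_diff_le) auto
  also have "\<dots> = (A *v y) \<bullet> d"
    by (simp add: inner_vec_def d_def mult.assoc flip: optimality)
  finally have f_diff: "\<beta> / 4 * (\<Sum>i\<in>UNIV. (z $ i) ^ 4) - \<beta> / 4 * (\<Sum>i\<in>UNIV. (y $ i) ^ 4)
      \<le> (A *v y) \<bullet> d" .
  have "z \<bullet> (A *v z) = (y + d) \<bullet> (A *v (y + d))"
    by (simp add: d_def)
  also have "\<dots> = y \<bullet> (A *v y) + 2 * ((A *v y) \<bullet> d) + d \<bullet> (A *v d)"
    using symmetric_matrix_inner_commute[OF sym, of y d]
    by (simp add: matrix_vector_right_distrib inner_add_left inner_add_right inner_commute)
  finally have g_diff: "z \<bullet> (A *v z) = y \<bullet> (A *v y) + 2 * ((A *v y) \<bullet> d) + d \<bullet> (A *v d)" .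
  with f_diff show ?thesis
    unfolding doch_energy_def d_def by linarith
qed

lemma doch_energy_quartic_lower_bound:
  fixes A :: "real^'n^'n"
  assumes "\<beta> > 0"
  obtains C where "\<And>y. \<beta> / 8 * (\<Sum>i\<in>UNIV. (y $ i) ^ 4) - C \<le> doch_energy \<beta> A y"
proof -
  obtain K where K: "\<And>y. norm (A *v y) \<le> norm y * K"
    using bounded_linear.bounded[OF matrix_vector_mul_bounded_linear] by blast
  have "\<beta> / 8 * (\<Sum>i\<in>UNIV. (y $ i) ^ 4) - CARD('n) * K\<^sup>2 / (2 * \<beta>) \<le> doch_energy \<beta> A y"
    for y :: "real^'n"
  proof -
    have "y \<bullet> (A *v y) \<le> norm y * norm (A *v y)"
      by (rule norm_cauchy_schwarz)
    also have "\<dots> \<le> norm y * (norm y * K)"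
      by (intro mult_left_mono K) simp
    also have "\<dots> = K * (y \<bullet> y)"
      by (simp add: dot_square_norm power2_eq_square mult_ac)
    also have "\<dots> = (\<Sum>i\<in>UNIV. K * (y $ i)\<^sup>2)"
      by (simp add: inner_vec_def power2_eq_square sum_distrib_left)
    finally have "(\<Sum>i\<in>UNIV. \<beta> / 4 * (y $ i) ^ 4 - K / 2 * (y $ i)\<^sup>2) \<le> doch_energy \<beta> A y"
      by (simp add: doch_energy_def sum_subtractf sum_distrib_left sum_divide_distrib [symmetric])
    moreover have "(\<Sum>i\<in>UNIV. \<beta> / 8 * (y $ i) ^ 4 - K\<^sup>2 / (2 * \<beta>))
        \<le> (\<Sum>i\<in>UNIV. \<beta> / 4 * (y $ i) ^ 4 - K / 2 * (y $ i)\<^sup>2)"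
      using assms by (intro sum_mono quartic_minus_quadratic_ge)
    ultimately show ?thesis
      by (simp add: sum_subtractf sum_distrib_left)
  qed
  then show ?thesis
    using that by blast
qed

lemma doch_energy_bounded_below:
  fixes A :: "real^'n^'n"
  assumes "\<beta> > 0"
  obtains L where "\<And>y. L \<le> doch_energy \<beta> A y"
proof -
  obtain C where C: "\<And>y. \<beta> / 8 * (\<Sum>i\<in>UNIV. (y $ i) ^ 4) - C \<le> doch_energy \<beta> A y"
    using doch_energy_quartic_lower_bound[OF assms] by blast
  have "-C \<le> doch_energy \<beta> A y" for y
  proof -
    have "0 \<le> \<beta> / 8 * (\<Sum>i\<in>UNIV. (y $ i) ^ 4)"
      using assms by (intro mult_nonneg_nonneg sum_nonneg) auto
    with C[of y] show ?thesis
      by linarith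
  qed
  then show ?thesis
    using that by blast
qed

lemma bounded_doch_energy_sublevel:
  fixes A :: "real^'n^'n"
  assumes "\<beta> > 0"
  shows "bounded {y. doch_energy \<beta> A y \<le> M}"
proof -
  obtain C where C: "\<And>y. \<beta> / 8 * (\<Sum>i\<in>UNIV. (y $ i) ^ 4) - C \<le> doch_energy \<beta> A y"
    using doch_energy_quartic_lower_bound[OF assms] by blast
  have "(\<Sum>i\<in>UNIV. (y $ i) ^ 4) \<le> 8 / \<beta> * (M + C)" if "doch_energy \<beta> A y \<le> M" for y
    using C[of y] that assms by (simp add: field_simps)
  then show ?thesis
    by (intro bounded_subset[OF bounded_quartic_sublevel]) auto
qed

lemma doch_step_energy_decrease:
  fixes J :: "real^'n^'n" and \<alpha> \<beta> :: real
  assumes "transpose J = J" and "\<beta> > 0"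
  defines "A \<equiv> J + \<alpha> *\<^sub>R mat 1"
  shows "lambda_min A / 2 * (norm (doch_step J \<alpha> \<beta> y - y))\<^sup>2
    \<le> doch_energy \<beta> A y - doch_energy \<beta> A (doch_step J \<alpha> \<beta> y)"
proof -
  have sym: "transpose A = A"
    using assms(1) by (simp add: A_def transpose_add transpose_scalar)
  show ?thesis
    using doch_energy_descent[OF sym \<open>\<beta> > 0\<close>, of "doch_step J \<alpha> \<beta> y" y]
      lambda_min_quadratic_form_le[OF sym, of "doch_step J \<alpha> \<beta> y - y"]
    by (simp add: A_def doch_step_optimality[OF \<open>\<beta> > 0\<close>])
qed

theorem propositionS7:
  fixes J :: "real^'n^'n" and \<alpha> \<beta> :: real and x :: "nat \<Rightarrow> real^'n"
  assumes symm: "transpose J = J"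
    and diag0: "\<forall>i. J $ i $ i = 0"
    and alpha_pos: "\<alpha> > 0" and beta_pos: "\<beta> > 0"
    and mu_pos: "lambda_min (J + \<alpha> *\<^sub>R mat 1) > 0"
    and iter: "\<forall>k. x (Suc k) = doch_step J \<alpha> \<beta> (x k)"
  shows "bounded (range x) \<and> (\<lambda>k. norm (x (Suc k) - x k)) \<longlonglongrightarrow> 0"
proof -
  define \<mu> where "\<mu> = lambda_min (J + \<alpha> *\<^sub>R mat 1)"
  define E where "E k = doch_energy \<beta> (J + \<alpha> *\<^sub>R mat 1) (x k)" for k
  define D where "D k = (norm (x (Suc k) - x k))\<^sup>2" for k
  have decrease: "\<mu> / 2 * D k \<le> E k - E (Suc k)" for k
    using doch_step_energy_decrease[OF symm beta_pos] by (simp add: \<mu>_def E_def D_def iter)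
  have "decseq E"
  proof (rule decseq_SucI)
    fix k
    have "0 \<le> \<mu> / 2 * D k"
      using mu_pos by (simp add: \<mu>_def D_def)
    with decrease[of k] show "E (Suc k) \<le> E k"
      by linarith
  qed
  then have "range x \<subseteq> {y. doch_energy \<beta> (J + \<alpha> *\<^sub>R mat 1) y \<le> E 0}"
    by (auto simp: E_def decseq_def)
  then have "bounded (range x)"
    using bounded_doch_energy_sublevel[OF beta_pos] bounded_subset by blast
  moreover obtain L where "\<And>k. L \<le> E k"
    using doch_energy_bounded_below[OF beta_pos] E_def by metis
  then have "summable D"
    using decrease mu_pos
    by (intro summable_of_sufficient_decrease[of "\<mu> / 2" D E L]) (simp_all add: \<mu>_def D_def)
  then have "(\<lambda>k. sqrt (D k)) \<longlonglongrightarrow> 0"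
    using summable_LIMSEQ_zero tendsto_real_sqrt by fastforce
  ultimately show ?thesis
    by (simp add: D_def)
qed

end
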